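(* Let $L>0$ and $\sigma>0$, and let $X_1,\dots,X_n$ be i.i.d. real random variables from a symmetric distribution with $\mathbb{P}(|X_i|>\sigma)=1/2$ (e.g. uniform on $(-2\sigma,2\sigma)$). Then there is a symmetric function $K:\mathbb{R}\times\mathbb{R}\to\mathbb{R}$ satisfying $|K(x_1,x_2)-K(y_1,y_2)|\le L(|x_1-y_1|+|x_2-y_2|)$ for all $x_1,x_2,y_1,y_2$ such that, when $n\ge 8$, the kernel matrix $K=(K(X_i,X_j))_{i,j=1}^n$ satisfies $$\mathbb{P}\big(\|K-\mathbb{E}K\|>L\sigma n/8\big)\ge 1-e^{-n/8}.$$
   Context: $\|\cdot\|$ denotes the spectral norm of an $n\times n$ matrix. *)

theory Defs
  imports "HOL-Analysis.Analysis" "HOL-Probability.Probability"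
begin

definition spectral_norm :: "real^'n^'n \<Rightarrow> real" where
  "spectral_norm A = onorm (\<lambda>v. A *v v)"

end

theory Submission
  imports Defs
begin

(* Take K(x, y) = k x + k y with k = L * clip sigma, the truncation of L x to [-L sigma, L sigma].
   As k is odd and L-Lipschitz and every X_i is symmetric, E K = 0, so the centered kernel matrix is
   the rank-two matrix (u_i + u_j) with u_i = k (X_i).  Testing it on the all-ones vector gives
   ||K||^2 >= n |u|^2 >= n (L sigma)^2 #{i. |X_i| > sigma}.  This count has mean n/2, and by
   Hoeffding's inequality it exceeds n/64 except with probability exp(-2 (31/64)^2 n) <= exp(-n/8),
   in which case ||K|| > L sigma n/8. *)

definition clip :: "real \<Rightarrow> real \<Rightarrow> real" where
  "clip s t = max (- s) (min s t)"

lemma clip_abs_le: "0 \<le> s \<Longrightarrow> \<bar>clip s t\<bar> \<le> s"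
  unfolding clip_def by auto

lemma clip_minus: "0 \<le> s \<Longrightarrow> clip s (- t) = - clip s t"
  unfolding clip_def by auto

lemma clip_dist_le: "\<bar>clip s t - clip s t'\<bar> \<le> \<bar>t - t'\<bar>"
  unfolding clip_def by auto

lemma clip_sq_outside: "s < \<bar>t\<bar> \<Longrightarrow> (clip s t)\<^sup>2 = s\<^sup>2"
  unfolding clip_def by (auto simp: max_def min_def)

lemma borel_measurable_clip [measurable]: "clip s \<in> borel_measurable borel"
  unfolding clip_def by (intro borel_measurable_continuous_onI continuous_intros)

lemma sum_clip_sq_ge:
  fixes s :: real
  assumes "finite I"
  shows "s\<^sup>2 * card {i \<in> I. s < \<bar>x i\<bar>} \<le> (\<Sum>i\<in>I. (clip s (x i))\<^sup>2)"
proof -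
  have "s\<^sup>2 * card {i \<in> I. s < \<bar>x i\<bar>} = (\<Sum>i | i \<in> I \<and> s < \<bar>x i\<bar>. (clip s (x i))\<^sup>2)"
    by (simp add: clip_sq_outside)
  also have "\<dots> \<le> (\<Sum>i\<in>I. (clip s (x i))\<^sup>2)"
    using assms by (intro sum_mono2) auto
  finally show ?thesis .
qed

lemma spectral_norm_nonneg: "0 \<le> spectral_norm A"
  unfolding spectral_norm_def by (rule onorm_pos_le) simp

lemma norm_mult_vec_le_spectral_norm: "norm (A *v x) \<le> spectral_norm A * norm x"
  unfolding spectral_norm_def by (rule onorm) simp

lemma spectral_norm_uminus: "spectral_norm (- A) = spectral_norm A"
proof -
  have "(*v) (- A) = (\<lambda>v. - (A *v v))"
    by (auto simp: fun_eq_iff vec_eq_iff matrix_vector_mult_def sum_negf)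
  then show ?thesis
    by (simp add: spectral_norm_def onorm_neg)
qed

lemma spectral_norm_triangle: "spectral_norm (A + B) \<le> spectral_norm A + spectral_norm B"
  using onorm_triangle[of "(*v) A" "(*v) B"]
  by (simp add: spectral_norm_def matrix_vector_mult_add_rdistrib)

lemma abs_spectral_norm_diff_le: "\<bar>spectral_norm A - spectral_norm B\<bar> \<le> spectral_norm (A - B)"
  using spectral_norm_triangle[of B "A - B"] spectral_norm_triangle[of A "B - A"]
    spectral_norm_uminus[of "A - B"]
  by (simp add: abs_le_iff)

lemma spectral_norm_le_norm: "spectral_norm A \<le> real CARD('n) * real CARD('n) * norm A"
  for A :: "real^'n^'n"
  unfolding spectral_norm_def
proof (rule onorm_le_matrix_component)
  fix i j
  show "\<bar>A $ i $ j\<bar> \<le> norm A"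
    using component_le_norm_cart[of "A $ i" j] Finite_Cartesian_Product.norm_nth_le[of A i] by linarith
qed

lemma lipschitz_on_spectral_norm:
  "(real CARD('n) * real CARD('n))-lipschitz_on UNIV (spectral_norm :: real^'n^'n \<Rightarrow> real)"
proof (rule lipschitz_onI)
  fix A B :: "real^'n^'n"
  show "dist (spectral_norm A) (spectral_norm B) \<le> real CARD('n) * real CARD('n) * dist A B"
    using abs_spectral_norm_diff_le[of A B] spectral_norm_le_norm[of "A - B"]
    by (simp add: dist_norm dist_real_def)
qed simp

lemma borel_measurable_spectral_norm [measurable]:
  "(spectral_norm :: real^'n^'n \<Rightarrow> real) \<in> borel_measurable borel"
  by (rule borel_measurable_continuous_onI lipschitz_on_continuous_on lipschitz_on_spectral_norm)+

lemma borel_measurable_vec_lambda [measurable]: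
  fixes f :: "'n::finite \<Rightarrow> 'a \<Rightarrow> 'b::euclidean_space"
  assumes "\<And>i. f i \<in> borel_measurable M"
  shows "(\<lambda>\<omega>. \<chi> i. f i \<omega>) \<in> borel_measurable M"
  unfolding borel_measurable_euclidean_space[where 'c="'b^'n"]
  using assms by (auto simp: Basis_vec_def inner_axis)

lemma card_mult_norm_sq_le_spectral_norm_sq:
  fixes u :: "real^'n"
  shows "real CARD('n) * (norm u)\<^sup>2 \<le> (spectral_norm (\<chi> i j. u $ i + u $ j))\<^sup>2"
proof -
  define n where "n = real CARD('n)"
  define S where "S = (\<Sum>j\<in>UNIV. u $ j)"
  define A where "A = (\<chi> i j. u $ i + u $ j :: real^'n^'n)"
  define one :: "real^'n" where "one = (\<chi> i. 1)"
  have n: "0 < n"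
    by (simp add: n_def)
  have "A *v one = (\<chi> i. n * u $ i + S)"
    by (simp add: A_def one_def matrix_vector_mult_def sum.distrib n_def S_def)
  then have "(norm (A *v one))\<^sup>2 = (\<Sum>i\<in>UNIV. (n * u $ i + S)\<^sup>2)"
    by (simp add: norm_vec_def L2_set_def sum_nonneg)
  also have "\<dots> = (\<Sum>i\<in>UNIV. n\<^sup>2 * (u $ i)\<^sup>2 + 2 * n * S * u $ i + S\<^sup>2)"
    by (simp add: power2_sum algebra_simps)
  also have "\<dots> = n\<^sup>2 * (norm u)\<^sup>2 + 3 * n * S\<^sup>2"
    by (simp add: sum.distrib norm_vec_def L2_set_def sum_nonneg sum_distrib_left[symmetric]
        S_def n_def power2_eq_square)
  finally have "n\<^sup>2 * (norm u)\<^sup>2 \<le> (norm (A *v one))\<^sup>2"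
    using n by simp
  also have "\<dots> \<le> (spectral_norm A * norm one)\<^sup>2"
    by (intro power_mono norm_mult_vec_le_spectral_norm) simp
  also have "\<dots> = (spectral_norm A)\<^sup>2 * n"
    by (simp add: power_mult_distrib one_def norm_vec_def L2_set_def n_def)
  finally show ?thesis
    using n by (simp add: A_def n_def power2_eq_square)
qed

definition clip_kernel :: "real \<Rightarrow> real \<Rightarrow> real \<Rightarrow> real \<Rightarrow> real" where
  "clip_kernel L s x y = L * clip s x + L * clip s y"

lemma clip_kernel_commute: "clip_kernel L s x y = clip_kernel L s y x"
  by (simp add: clip_kernel_def)

lemma clip_kernel_lipschitz:
  assumes "0 \<le> L"
  shows "\<bar>clip_kernel L s x1 x2 - clip_kernel L s y1 y2\<bar> \<le> L * (\<bar>x1 - y1\<bar> + \<bar>x2 - y2\<bar>)"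
proof -
  have "clip_kernel L s x1 x2 - clip_kernel L s y1 y2
      = L * ((clip s x1 - clip s y1) + (clip s x2 - clip s y2))"
    by (simp add: clip_kernel_def algebra_simps)
  then have "\<bar>clip_kernel L s x1 x2 - clip_kernel L s y1 y2\<bar>
      = L * \<bar>(clip s x1 - clip s y1) + (clip s x2 - clip s y2)\<bar>"
    using assms by (simp add: abs_mult)
  also have "\<dots> \<le> L * (\<bar>x1 - y1\<bar> + \<bar>x2 - y2\<bar>)"
    using assms by (intro mult_left_mono order_trans[OF abs_triangle_ineq] add_mono clip_dist_le) auto
  finally show ?thesis .
qed

lemma spectral_norm_clip_kernel_gt:
  fixes x :: "'n::finite \<Rightarrow> real"
  assumes "0 < L" "0 < s" "real CARD('n) / 64 < card {i. s < \<bar>x i\<bar>}"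
  shows "L * s * CARD('n) / 8 < spectral_norm (\<chi> i j. clip_kernel L s (x i) (x j))"
proof -
  define n where "n = real CARD('n)"
  define u :: "real^'n" where "u = (\<chi> i. L * clip s (x i))"
  have "(L * s)\<^sup>2 * (n / 64) < (L * s)\<^sup>2 * card {i. s < \<bar>x i\<bar>}"
    using assms by (simp add: n_def)
  also have "\<dots> \<le> L\<^sup>2 * (\<Sum>i\<in>UNIV. (clip s (x i))\<^sup>2)"
    unfolding power_mult_distrib mult.assoc
    using sum_clip_sq_ge[of UNIV s x] by (intro mult_left_mono) auto
  also have "\<dots> = (norm u)\<^sup>2"
    by (simp add: u_def norm_vec_def L2_set_def sum_nonneg power_mult_distrib sum_distrib_left)
  finally have "(L * s * n / 8)\<^sup>2 < n * (norm u)\<^sup>2"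
    by (simp add: n_def power2_eq_square field_simps)
  also have "\<dots> \<le> (spectral_norm (\<chi> i j. u $ i + u $ j))\<^sup>2"
    unfolding n_def by (rule card_mult_norm_sq_le_spectral_norm_sq)
  finally have "L * s * n / 8 < spectral_norm (\<chi> i j. u $ i + u $ j)"
    using power_less_imp_less_base spectral_norm_nonneg by blast
  then show ?thesis
    by (simp add: u_def clip_kernel_def n_def)
qed

lemma (in prob_space) expectation_odd_of_symmetric:
  fixes X :: "'a \<Rightarrow> real" and f :: "real \<Rightarrow> real"
  assumes [measurable]: "X \<in> borel_measurable M" "f \<in> borel_measurable borel"
    and symmetric: "distr M borel (\<lambda>\<omega>. - X \<omega>) = distr M borel X"
    and odd: "\<And>t. f (- t) = - f t"
  shows "expectation (\<lambda>\<omega>. f (X \<omega>)) = 0"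
proof -
  have "expectation (\<lambda>\<omega>. f (X \<omega>)) = integral\<^sup>L (distr M borel X) f"
    by (subst integral_distr) simp_all
  also have "\<dots> = expectation (\<lambda>\<omega>. f (- X \<omega>))"
    by (subst symmetric[symmetric], subst integral_distr) simp_all
  also have "\<dots> = - expectation (\<lambda>\<omega>. f (X \<omega>))"
    by (simp add: odd)
  finally show ?thesis
    by simp
qed

lemma (in prob_space) expectation_clip_kernel:
  assumes [measurable]: "X \<in> borel_measurable M" "Y \<in> borel_measurable M"
    and "distr M borel (\<lambda>\<omega>. - X \<omega>) = distr M borel X"
    and "distr M borel (\<lambda>\<omega>. - Y \<omega>) = distr M borel Y"
    and "0 \<le> s"
  shows "expectation (\<lambda>\<omega>. clip_kernel L s (X \<omega>) (Y \<omega>)) = 0"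
proof -
  have integrable: "integrable M (\<lambda>\<omega>. clip s (Z \<omega>))" if [measurable]: "Z \<in> borel_measurable M" for Z
    by (rule integrable_const_bound[where B = s]) (auto simp: clip_abs_le \<open>0 \<le> s\<close>)
  have "expectation (\<lambda>\<omega>. clip s (Z \<omega>)) = 0"
    if "Z \<in> borel_measurable M" "distr M borel (\<lambda>\<omega>. - Z \<omega>) = distr M borel Z" for Z
    using that assms(5) by (intro expectation_odd_of_symmetric) (auto simp: clip_minus)
  with assms integrable[of X] integrable[of Y] show ?thesis
    by (simp add: clip_kernel_def)
qed

lemma (in prob_space) prob_card_occurrences_gt:
  fixes X :: "'i \<Rightarrow> 'a \<Rightarrow> 'b" and p t :: real
  assumes "finite I" "I \<noteq> {}" and indep: "indep_vars (\<lambda>_. N) X I" and A: "A \<in> sets N"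
    and prob_A: "\<And>i. i \<in> I \<Longrightarrow> prob {\<omega> \<in> space M. X i \<omega> \<in> A} = p"
    and "0 \<le> t"
  shows "1 - exp (- 2 * t\<^sup>2 * card I)
           \<le> prob {\<omega> \<in> space M. (p - t) * card I < card {i \<in> I. X i \<omega> \<in> A}}"
proof -
  define Y where "Y = (\<lambda>i \<omega>. indicator A (X i \<omega>) :: real)"
  have X_measurable [measurable]: "X i \<in> measurable M N" if "i \<in> I" for i
    using indep that by (auto simp: indep_vars_def)
  interpret Hoeffding_ineq M I Y "\<lambda>_. 0" "\<lambda>_. 1" "\<Sum>i\<in>I. expectation (Y i)"
  proof unfold_locales
    show "indep_vars (\<lambda>_. borel) Y I"
      unfolding Y_def using A by (intro indep_vars_compose2[OF indep]) auto
  qed (auto simp: \<open>finite I\<close> Y_def)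
  have "expectation (Y i) = p" if "i \<in> I" for i
  proof -
    have "expectation (Y i) = expectation (indicator {\<omega> \<in> space M. X i \<omega> \<in> A})"
      by (intro Bochner_Integration.integral_cong) (auto simp: Y_def indicator_def)
    also have "\<dots> = p"
      using prob_A[OF that] that A by simp
    finally show ?thesis .
  qed
  then have mean: "(\<Sum>i\<in>I. expectation (Y i)) = p * card I"
    by simp
  have card_eq: "card {i \<in> I. X i \<omega> \<in> A} = (\<Sum>i\<in>I. Y i \<omega>)" for \<omega>
    using \<open>finite I\<close> by (simp add: Y_def indicator_def sum.If_cases Int_def conj_commute)
  have "(\<Sum>i\<in>I. (1 - 0 :: real)\<^sup>2) > 0"
    using \<open>finite I\<close> \<open>I \<noteq> {}\<close> by (simp add: card_gt_0_iff)
  then have "prob {\<omega> \<in> space M. (\<Sum>i\<in>I. Y i \<omega>) \<le> (p - t) * card I} \<le> exp (- 2 * t\<^sup>2 * card I)"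
    using Hoeffding_ineq_le[of "t * card I"] \<open>0 \<le> t\<close> mean
    by (simp add: algebra_simps power2_eq_square)
  moreover have "{\<omega> \<in> space M. (\<Sum>i\<in>I. Y i \<omega>) \<le> (p - t) * card I}
      = space M - {\<omega> \<in> space M. (p - t) * card I < (\<Sum>i\<in>I. Y i \<omega>)}"
    by auto
  moreover have "(\<lambda>\<omega>. \<Sum>i\<in>I. Y i \<omega>) \<in> borel_measurable M"
    using A by (auto simp: Y_def intro!: borel_measurable_sum)
  then have "{\<omega> \<in> space M. (p - t) * card I < (\<Sum>i\<in>I. Y i \<omega>)} \<in> events"
    by measurable
  ultimately show ?thesis
    by (simp add: card_eq prob_compl)
qed

theorem proposition1:
  fixes M :: "'a measure" and X :: "'n::finite \<Rightarrow> 'a \<Rightarrow> real"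
    and L \<sigma> :: real
  assumes "prob_space M"
    and "L > 0" and "\<sigma> > 0"
    and "\<And>i. X i \<in> borel_measurable M"
    and "prob_space.indep_vars M (\<lambda>_. borel) X UNIV"
    and "\<And>i j. distr M borel (X i) = distr M borel (X j)"
    and "\<And>i. distr M borel (\<lambda>\<omega>. - X i \<omega>) = distr M borel (X i)"
    and "\<And>i. measure M {\<omega> \<in> space M. \<bar>X i \<omega>\<bar> > \<sigma>} = 1/2"
  shows "\<exists>K :: real \<Rightarrow> real \<Rightarrow> real.
           (\<forall>x y. K x y = K y x) \<and>
           (\<forall>x1 x2 y1 y2. \<bar>K x1 x2 - K y1 y2\<bar> \<le> L * (\<bar>x1 - y1\<bar> + \<bar>x2 - y2\<bar>)) \<and>
           (CARD('n) \<ge> 8 \<longrightarrow>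
              measure M {\<omega> \<in> space M.
                 spectral_norm (\<chi> i j. K (X i \<omega>) (X j \<omega>)
                                   - integral\<^sup>L M (\<lambda>\<eta>. K (X i \<eta>) (X j \<eta>)))
                 > L * \<sigma> * real CARD('n) / 8}
              \<ge> 1 - exp (- real CARD('n) / 8))"
proof -
  interpret prob_space M by fact
  note X_measurable [measurable] = assms(4)
  let ?K = "clip_kernel L \<sigma>"
  let ?n = "real CARD('n)"
  have centered: "(\<chi> i j. ?K (X i \<omega>) (X j \<omega>) - expectation (\<lambda>\<eta>. ?K (X i \<eta>) (X j \<eta>)))
      = (\<chi> i j. ?K (X i \<omega>) (X j \<omega>))" for \<omega>
    using assms by (simp add: expectation_clip_kernel)
  have "1 - exp (- ?n / 8) \<le> 1 - exp (- 2 * (31/64)\<^sup>2 * ?n)"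
    by (simp add: power2_eq_square)
  also have "\<dots> \<le> prob {\<omega> \<in> space M. (1/2 - 31/64) * ?n < card {i. \<sigma> < \<bar>X i \<omega>\<bar>}}"
    using prob_card_occurrences_gt[of UNIV borel X "{x. \<sigma> < \<bar>x\<bar>}" "1/2" "31/64"] assms(5,8)
    by simp
  also have "\<dots> \<le> prob {\<omega> \<in> space M. spectral_norm (\<chi> i j. ?K (X i \<omega>) (X j \<omega>)) > L * \<sigma> * ?n / 8}"
  proof (rule finite_measure_mono)
    show "{\<omega> \<in> space M. spectral_norm (\<chi> i j. ?K (X i \<omega>) (X j \<omega>)) > L * \<sigma> * ?n / 8} \<in> events"
      unfolding clip_kernel_def by measurable
  qed (use spectral_norm_clip_kernel_gt[OF assms(2,3)] in auto)
  finally have "1 - exp (- ?n / 8)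
      \<le> prob {\<omega> \<in> space M. spectral_norm (\<chi> i j. ?K (X i \<omega>) (X j \<omega>)) > L * \<sigma> * ?n / 8}" .
  then show ?thesis
    using assms(2)
    by (intro exI[of _ ?K] conjI allI impI clip_kernel_commute clip_kernel_lipschitz)
      (simp_all add: centered)
qed

end
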